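(* Let $\Delta\geq 2$ be an integer and let $G$ be a connected bipartite graph of maximum degree at most $\Delta$. Then $$\alpha(G)\geq \frac{1}{2}\left(1+\frac{1}{2(\Delta-1)}\right)\mathrm{diss}(G)-\frac{1}{2(\Delta-1)}.$$
   Context: All graphs are finite, simple and undirected. $\alpha(G)$ is the independence number. A set $D$ of vertices is a dissociation set if the induced subgraph $G[D]$ has maximum degree at most $1$; $\mathrm{diss}(G)$ is the maximum order of a dissociation set. *)

theory Defs
  imports Complex_Main
begin

definition simple_graph :: "'a set \<Rightarrow> ('a \<Rightarrow> 'a \<Rightarrow> bool) \<Rightarrow> bool" where
  "simple_graph V E \<longleftrightarrow> finite V \<and> (\<forall>u v. E u v \<longrightarrow> u \<in> V \<and> v \<in> V)
     \<and> (\<forall>u v. E u v \<longrightarrow> E v u) \<and> (\<forall>v. \<not> E v v)"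

definition degree :: "'a set \<Rightarrow> ('a \<Rightarrow> 'a \<Rightarrow> bool) \<Rightarrow> 'a \<Rightarrow> nat" where
  "degree V E v = card {u \<in> V. E v u}"

definition max_degree_le :: "'a set \<Rightarrow> ('a \<Rightarrow> 'a \<Rightarrow> bool) \<Rightarrow> nat \<Rightarrow> bool" where
  "max_degree_le V E d \<longleftrightarrow> (\<forall>v \<in> V. degree V E v \<le> d)"

definition connected_graph :: "'a set \<Rightarrow> ('a \<Rightarrow> 'a \<Rightarrow> bool) \<Rightarrow> bool" where
  "connected_graph V E \<longleftrightarrow> V \<noteq> {} \<and> (\<forall>u \<in> V. \<forall>v \<in> V. E\<^sup>*\<^sup>* u v)"

definition bipartite :: "'a set \<Rightarrow> ('a \<Rightarrow> 'a \<Rightarrow> bool) \<Rightarrow> bool" where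
  "bipartite V E \<longleftrightarrow> (\<exists>A B. A \<union> B = V \<and> A \<inter> B = {} \<and>
      (\<forall>u v. E u v \<longrightarrow> (u \<in> A \<and> v \<in> B) \<or> (u \<in> B \<and> v \<in> A)))"

definition independent_set :: "'a set \<Rightarrow> ('a \<Rightarrow> 'a \<Rightarrow> bool) \<Rightarrow> 'a set \<Rightarrow> bool" where
  "independent_set V E S \<longleftrightarrow> S \<subseteq> V \<and> (\<forall>u \<in> S. \<forall>v \<in> S. \<not> E u v)"

definition dissociation_set :: "'a set \<Rightarrow> ('a \<Rightarrow> 'a \<Rightarrow> bool) \<Rightarrow> 'a set \<Rightarrow> bool" where
  "dissociation_set V E S \<longleftrightarrow> S \<subseteq> V \<and> (\<forall>v \<in> S. card {u \<in> S. E v u} \<le> 1)"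

definition independence_number :: "'a set \<Rightarrow> ('a \<Rightarrow> 'a \<Rightarrow> bool) \<Rightarrow> nat" where
  "independence_number V E = Max (card ` {S. independent_set V E S})"

definition dissociation_number :: "'a set \<Rightarrow> ('a \<Rightarrow> 'a \<Rightarrow> bool) \<Rightarrow> nat" where
  "dissociation_number V E = Max (card ` {S. dissociation_set V E S})"

end

theory Submission
  imports Defs
begin

text \<open>
  Let \<open>D\<close> be a maximum dissociation set of \<open>G\<close>, of size \<open>d\<close>, and \<open>n = |V|\<close>. Every component of
  \<open>G[D]\<close> is a vertex or an edge, so choosing one vertex per component gives a set \<open>T\<close> with
  \<open>d \<le> 2|T|\<close>. Deleting the \<open>n - d\<close> vertices outside \<open>D\<close> from a connected graph of maximum
  degree \<open>\<Delta>\<close> leaves at most \<open>1 + (\<Delta> - 1)(n - d)\<close> components (each deleted vertex merges at most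
  \<open>\<Delta>\<close> components into one), hence \<open>d \<le> 2 + 2(\<Delta> - 1)(n - d)\<close>. Since \<open>G\<close> is bipartite,
  \<open>n \<le> 2\<alpha>(G)\<close>, and the bound follows by rearranging.
\<close>

definition reachable_within :: "('a \<Rightarrow> 'a \<Rightarrow> bool) \<Rightarrow> 'a set \<Rightarrow> 'a \<Rightarrow> 'a \<Rightarrow> bool" where
  "reachable_within E S = (\<lambda>x y. E x y \<and> x \<in> S \<and> y \<in> S)\<^sup>*\<^sup>*"

text \<open>\<open>T\<close> meets every component of the induced subgraph \<open>G[S]\<close> at most once.\<close>
definition separated_within :: "('a \<Rightarrow> 'a \<Rightarrow> bool) \<Rightarrow> 'a set \<Rightarrow> 'a set \<Rightarrow> bool" where
  "separated_within E S T \<longleftrightarrow>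
     T \<subseteq> S \<and> (\<forall>t \<in> T. \<forall>t' \<in> T. reachable_within E S t t' \<longrightarrow> t = t')"

definition attached :: "('a \<Rightarrow> 'a \<Rightarrow> bool) \<Rightarrow> 'a set \<Rightarrow> 'a \<Rightarrow> 'a set \<Rightarrow> 'a set" where
  "attached E S v T = {t \<in> T. \<exists>u \<in> S. E v u \<and> reachable_within E S t u}"

lemma reachable_within_sym:
  assumes "\<forall>u v. E u v \<longrightarrow> E v u" and "reachable_within E S x y"
  shows "reachable_within E S y x"
proof -
  have "symp (\<lambda>x y. E x y \<and> x \<in> S \<and> y \<in> S)"
    using assms(1) by (auto intro: sympI)
  then show ?thesis
    using assms(2) unfolding reachable_within_def by (meson sympD symp_rtranclp)
qed

lemma reachable_within_trans:
  "reachable_within E S x y \<Longrightarrow> reachable_within E S y z \<Longrightarrow> reachable_within E S x z"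
  unfolding reachable_within_def by (meson rtranclp_trans)

lemma reachable_within_mem: "reachable_within E S x y \<Longrightarrow> x \<noteq> y \<Longrightarrow> y \<in> S"
  unfolding reachable_within_def by (induction rule: rtranclp_induct) auto

lemma reachable_within_insert:
  assumes sym: "\<forall>u v. E u v \<longrightarrow> E v u"
    and "reachable_within E (insert v S) x y" and x: "x \<in> S"
  shows "reachable_within E S x y \<or> (\<exists>u \<in> S. E v u \<and> reachable_within E S x u)"
  using assms(2)
  unfolding reachable_within_def
proof (induction rule: rtranclp_induct)
  case base
  then show ?case by simp
next
  case (step y z)
  from step.IH show ?case
  proof
    assume xy: "(\<lambda>x y. E x y \<and> x \<in> S \<and> y \<in> S)\<^sup>*\<^sup>* x y"
    then have "y \<in> S"
      using reachable_within_mem[of E S x y] x unfolding reachable_within_def by blast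
    then show ?case
      using xy step(2) sym by (cases "z \<in> S") (auto intro: rtranclp.rtrancl_into_rtrancl)
  qed blast
qed

lemma reachable_within_vertex_set:
  assumes "simple_graph V E"
  shows "reachable_within E V = E\<^sup>*\<^sup>*"
proof -
  have "(\<lambda>x y. E x y \<and> x \<in> V \<and> y \<in> V) = E"
    using assms unfolding simple_graph_def by (auto intro!: ext)
  then show ?thesis unfolding reachable_within_def by simp
qed

lemma card_attached_le_degree:
  assumes "simple_graph V E" and "separated_within E S T" and "v \<in> V"
  shows "card (attached E S v T) \<le> degree V E v"
proof -
  have sym: "\<forall>u v. E u v \<longrightarrow> E v u" and finV: "finite V"
    using assms(1) unfolding simple_graph_def by auto
  define g where "g t = (SOME u. u \<in> S \<and> E v u \<and> reachable_within E S t u)" for t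
  have g: "g t \<in> S \<and> E v (g t) \<and> reachable_within E S t (g t)" if "t \<in> attached E S v T" for t
    using that unfolding attached_def g_def by (metis (mono_tags, lifting) mem_Collect_eq someI_ex)
  have "inj_on g (attached E S v T)"
  proof (rule inj_onI)
    fix a b assume ab: "a \<in> attached E S v T" "b \<in> attached E S v T" "g a = g b"
    then have "reachable_within E S a b"
      using g reachable_within_sym[OF sym] reachable_within_trans by metis
    then show "a = b"
      using assms(2) ab unfolding separated_within_def attached_def by auto
  qed
  moreover have "g ` attached E S v T \<subseteq> {u \<in> V. E v u}"
    using g assms(1) unfolding simple_graph_def by blast
  ultimately show ?thesis
    unfolding degree_def using card_inj_on_le finV by fastforce
qed

lemma separated_within_insert_unattached:
  assumes sym: "\<forall>u v. E u v \<longrightarrow> E v u"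
    and sep: "separated_within E S T" and "v \<notin> S" and "attached E S v T = {}"
  shows "separated_within E (insert v S) (insert v T)"
proof -
  have TS: "T \<subseteq> S" and unattached: "\<And>t u. t \<in> T \<Longrightarrow> u \<in> S \<Longrightarrow> E v u \<Longrightarrow> \<not> reachable_within E S t u"
    using sep assms(4) unfolding separated_within_def attached_def by auto
  have reach: "reachable_within E S t t'" if "t \<in> T" "reachable_within E (insert v S) t t'" for t t'
    using reachable_within_insert[OF sym that(2)] that(1) TS unattached by blast
  have "t = t'" if "t \<in> T" "t' \<in> insert v T" "reachable_within E (insert v S) t t'" for t t'
  proof -
    have "reachable_within E S t t'" using reach that by blast
    moreover have "t' \<noteq> v \<or> t = v"
      using calculation reachable_within_mem \<open>v \<notin> S\<close> by metis
    ultimately show ?thesis using sep that unfolding separated_within_def by auto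
  qed
  then show ?thesis
    using TS reachable_within_sym[OF sym] unfolding separated_within_def by blast
qed

text \<open>Adding \<open>v\<close> merges the components of \<open>G[S]\<close> that contain attached vertices into one.\<close>
lemma separated_within_insert_merge:
  assumes sym: "\<forall>u v. E u v \<longrightarrow> E v u"
    and sep: "separated_within E S T" and "t\<^sub>0 \<in> T"
  shows "separated_within E (insert v S) (insert t\<^sub>0 (T - attached E S v T))"
proof -
  have TS: "T \<subseteq> S"
    using sep unfolding separated_within_def by auto
  have unattached: "t = t'"
    if "t \<in> T - attached E S v T" "t' \<in> T" "reachable_within E (insert v S) t t'" for t t'
    using reachable_within_insert[OF sym that(3)] that sep TS
    unfolding separated_within_def attached_def by blast
  have "t = t'" if "t \<in> insert t\<^sub>0 (T - attached E S v T)" "t' \<in> insert t\<^sub>0 (T - attached E S v T)"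
    "reachable_within E (insert v S) t t'" for t t'
  proof (cases "t = t\<^sub>0")
    case True
    then show ?thesis
      using unattached[of t' t] that \<open>t\<^sub>0 \<in> T\<close> reachable_within_sym[OF sym] by blast
  next
    case False
    then show ?thesis
      using unattached[of t t'] that \<open>t\<^sub>0 \<in> T\<close> by blast
  qed
  moreover have "insert t\<^sub>0 (T - attached E S v T) \<subseteq> insert v S"
    using TS \<open>t\<^sub>0 \<in> T\<close> by blast
  ultimately show ?thesis
    unfolding separated_within_def by blast
qed

theorem card_separated_within_le:
  assumes G: "simple_graph V E" "connected_graph V E" "max_degree_le V E \<Delta>"
    and "\<Delta> \<ge> 1" and "R \<subseteq> V" and "separated_within E (V - R) T"
  shows "card T \<le> 1 + (\<Delta> - 1) * card R"
proof -
  have finV: "finite V" and sym: "\<forall>u v. E u v \<longrightarrow> E v u"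
    using G(1) unfolding simple_graph_def by auto
  have "finite R" using \<open>R \<subseteq> V\<close> finV finite_subset by blast
  then show ?thesis
    using \<open>R \<subseteq> V\<close> \<open>separated_within E (V - R) T\<close>
  proof (induction R arbitrary: T rule: finite_induct)
    case empty
    have TV: "T \<subseteq> V" and sep: "\<forall>t \<in> T. \<forall>t' \<in> T. E\<^sup>*\<^sup>* t t' \<longrightarrow> t = t'"
      using empty.prems(2) reachable_within_vertex_set[OF G(1)]
      unfolding separated_within_def by auto
    have "\<forall>t \<in> T. \<forall>t' \<in> T. t = t'"
      using G(2) TV sep unfolding connected_graph_def by (meson subsetD)
    moreover have "finite T"
      using finV TV finite_subset by blast
    ultimately show ?case
      using card_le_Suc0_iff_eq by auto
  next
    case (insert v R)
    define S where "S = V - insert v R"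
    have VR: "V - R = insert v S" and "v \<notin> S" and "v \<in> V" and "R \<subseteq> V"
      using insert.prems(1) insert.hyps(2) unfolding S_def by auto
    have sep: "separated_within E S T"
      using insert.prems(2) unfolding S_def by simp
    have finT: "finite T"
      using sep finV unfolding separated_within_def S_def by (meson Diff_subset finite_subset)
    have "degree V E v \<le> \<Delta>"
      using G(3) \<open>v \<in> V\<close> unfolding max_degree_le_def by blast
    then have A_le: "card (attached E S v T) \<le> \<Delta>"
      using card_attached_le_degree[OF G(1) sep \<open>v \<in> V\<close>] by linarith
    have bound_insert: "1 + (\<Delta> - 1) * card (insert v R) = (\<Delta> - 1) * card R + \<Delta>"
      using insert.hyps \<open>\<Delta> \<ge> 1\<close> by (cases \<Delta>) simp_all
    show ?case
    proof (cases "attached E S v T = {}")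
      case True
      have "card (insert v T) \<le> 1 + (\<Delta> - 1) * card R"
        using insert.IH[OF \<open>R \<subseteq> V\<close>] separated_within_insert_unattached[OF sym sep \<open>v \<notin> S\<close> True]
        unfolding VR by blast
      moreover have "v \<notin> T"
        using sep \<open>v \<notin> S\<close> unfolding separated_within_def by blast
      ultimately show ?thesis
        using finT bound_insert by simp
    next
      case False
      then obtain t\<^sub>0 where t\<^sub>0: "t\<^sub>0 \<in> attached E S v T" by blast
      have AT: "attached E S v T \<subseteq> T" unfolding attached_def by auto
      have "card (insert t\<^sub>0 (T - attached E S v T)) \<le> 1 + (\<Delta> - 1) * card R"
        using insert.IH[OF \<open>R \<subseteq> V\<close>] separated_within_insert_merge[OF sym sep, of t\<^sub>0 v] t\<^sub>0 AT
        unfolding VR by blast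
      moreover have "card (insert t\<^sub>0 (T - attached E S v T)) = card T - card (attached E S v T) + 1"
        using t\<^sub>0 AT finT by (simp add: card_Diff_subset finite_subset)
      moreover have "card (attached E S v T) \<le> card T"
        using AT finT card_mono by blast
      ultimately show ?thesis
        using A_le bound_insert by linarith
    qed
  qed
qed

lemma dissociation_set_neighbour_unique:
  assumes "dissociation_set V E D" and "finite D"
    and "y \<in> D" "x \<in> D" "z \<in> D" "E y x" "E y z"
  shows "x = z"
proof -
  have "card {u \<in> D. E y u} \<le> Suc 0"
    using assms(1,3) unfolding dissociation_set_def by auto
  then show ?thesis
    using card_le_Suc0_iff_eq[of "{u \<in> D. E y u}"] assms(2-) by auto
qed

lemma dissociation_set_reachable_within:
  assumes sym: "\<forall>u v. E u v \<longrightarrow> E v u" and D: "dissociation_set V E D" "finite D"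
    and "x \<in> D" and "reachable_within E D x y"
  shows "x = y \<or> E x y"
  using assms(5) unfolding reachable_within_def
proof (induction rule: rtranclp_induct)
  case (step y z)
  then show ?case
    using dissociation_set_neighbour_unique[OF D, of y x z] \<open>x \<in> D\<close> sym by blast
qed simp

text \<open>
  Order \<open>D\<close> by an injection \<open>h\<close> into \<open>\<nat>\<close> and keep the vertices that precede all their neighbours in
  \<open>D\<close>; every other vertex of \<open>D\<close> is mapped injectively to a kept one by its unique neighbour.
\<close>
lemma dissociation_set_half_independent:
  assumes sym: "\<forall>u v. E u v \<longrightarrow> E v u" and irr: "\<forall>v. \<not> E v v"
    and D: "dissociation_set V E D" "finite D"
  obtains T where "T \<subseteq> D" and "\<forall>t \<in> T. \<forall>t' \<in> T. \<not> E t t'" and "card D \<le> 2 * card T"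
proof -
  obtain h :: "'a \<Rightarrow> nat" where "inj_on h D"
    using ex_bij_betw_finite_nat[OF D(2)] bij_betw_def by blast
  define T where "T = {x \<in> D. \<forall>y \<in> D. E x y \<longrightarrow> h x < h y}"
  have "T \<subseteq> D" and indep: "\<forall>t \<in> T. \<forall>t' \<in> T. \<not> E t t'"
  proof -
    show "T \<subseteq> D" unfolding T_def by blast
    have "\<not> E t t'" if "t \<in> T" "t' \<in> T" for t t'
    proof
      assume "E t t'"
      then have "h t < h t'" and "h t' < h t"
        using that sym unfolding T_def by blast+
      then show False by simp
    qed
    then show "\<forall>t \<in> T. \<forall>t' \<in> T. \<not> E t t'" by blast
  qed
  have E_sym: "E y x" if "E x y" for x y
    using sym that by blast
  define p where "p x = (SOME y. y \<in> D \<and> E x y \<and> h y < h x)" for x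
  have p: "p x \<in> D \<and> E x (p x) \<and> h (p x) < h x" if x: "x \<in> D - T" for x
  proof -
    obtain y where y: "y \<in> D" "E x y" "\<not> h x < h y"
      using x unfolding T_def by blast
    have "y \<noteq> x"
      using irr y(2) by blast
    then have "h y \<noteq> h x"
      using inj_onD[OF \<open>inj_on h D\<close>, of y x] y(1) x by blast
    with y have "y \<in> D \<and> E x y \<and> h y < h x"
      by simp
    then show ?thesis
      unfolding p_def by (rule someI)
  qed
  have "p ` (D - T) \<subseteq> T"
  proof
    fix y assume "y \<in> p ` (D - T)"
    then obtain x where x: "x \<in> D - T" and y: "y = p x" by blast
    have "z = x" if "z \<in> D" "E y z" for z
      using dissociation_set_neighbour_unique[OF D, of y z x] p[OF x] that x E_sym y by blast
    then show "y \<in> T"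
      using p[OF x] y unfolding T_def by auto
  qed
  moreover have "inj_on p (D - T)"
  proof (rule inj_onI)
    fix x x' assume "x \<in> D - T" "x' \<in> D - T" "p x = p x'"
    then show "x = x'"
      using dissociation_set_neighbour_unique[OF D, of "p x" x x'] p E_sym by (metis DiffD1)
  qed
  moreover have "finite T"
    using D(2) \<open>T \<subseteq> D\<close> finite_subset by blast
  ultimately have "card (D - T) \<le> card T"
    using card_inj_on_le by blast
  moreover have "card D = card T + card (D - T)"
    using D(2) \<open>T \<subseteq> D\<close> by (metis card_Diff_subset card_mono finite_subset le_add_diff_inverse)
  ultimately have "card D \<le> 2 * card T" by linarith
  with \<open>T \<subseteq> D\<close> indep that show ?thesis by blast
qed

lemma dissociation_set_separated_half:
  assumes "simple_graph V E" and D: "dissociation_set V E D"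
  obtains T where "separated_within E D T" and "card D \<le> 2 * card T"
proof -
  have sym: "\<forall>u v. E u v \<longrightarrow> E v u" and irr: "\<forall>v. \<not> E v v" and "finite V"
    using assms(1) unfolding simple_graph_def by auto
  have finD: "finite D"
    using D \<open>finite V\<close> finite_subset unfolding dissociation_set_def by blast
  obtain T where TD: "T \<subseteq> D" and indep: "\<forall>t \<in> T. \<forall>t' \<in> T. \<not> E t t'"
    and DT: "card D \<le> 2 * card T"
    using dissociation_set_half_independent[OF sym irr D finD] by blast
  have "t = t'" if "t \<in> T" "t' \<in> T" "reachable_within E D t t'" for t t'
    using dissociation_set_reachable_within[OF sym D finD, of t t'] that TD indep by blast
  then have "separated_within E D T"
    using TD unfolding separated_within_def by blast
  then show ?thesis
    using DT by (rule that)
qed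

lemma dissociation_set_card_le:
  assumes G: "simple_graph V E" "connected_graph V E" "max_degree_le V E \<Delta>"
    and "\<Delta> \<ge> 1" and D: "dissociation_set V E D"
  shows "card D \<le> 2 + 2 * ((\<Delta> - 1) * (card V - card D))"
proof -
  have DV: "D \<subseteq> V" and "finite V"
    using D G(1) unfolding dissociation_set_def simple_graph_def by blast+
  obtain T where "separated_within E D T" and DT: "card D \<le> 2 * card T"
    using dissociation_set_separated_half[OF G(1) D] by blast
  moreover have "V - (V - D) = D"
    using DV by blast
  ultimately have "card T \<le> 1 + (\<Delta> - 1) * card (V - D)"
    using card_separated_within_le[OF G, of "V - D" T] \<open>\<Delta> \<ge> 1\<close> by auto
  also have "card (V - D) = card V - card D"
    using DV \<open>finite V\<close> by (simp add: card_Diff_subset finite_subset)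
  finally show ?thesis
    using DT by linarith
qed

lemma independence_number_ge:
  assumes "finite V" and "independent_set V E S"
  shows "card S \<le> independence_number V E"
proof -
  have "finite (card ` {S. independent_set V E S})"
    using assms(1) unfolding independent_set_def by (simp add: finite_subset)
  then show ?thesis
    unfolding independence_number_def using assms(2) by (intro Max_ge) auto
qed

lemma bipartite_card_le_twice_independence_number:
  assumes "finite V" and "bipartite V E"
  shows "card V \<le> 2 * independence_number V E"
proof -
  obtain A B where AB: "A \<union> B = V" "A \<inter> B = {}"
    "\<forall>u v. E u v \<longrightarrow> (u \<in> A \<and> v \<in> B) \<or> (u \<in> B \<and> v \<in> A)"
    using assms(2) unfolding bipartite_def by blast
  have "independent_set V E A" and "independent_set V E B"
    using AB unfolding independent_set_def by blast+
  moreover have "card V = card A + card B"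
    using AB assms(1) by (metis card_Un_disjoint finite_Un)
  ultimately show ?thesis
    using independence_number_ge[OF assms(1)] by (metis add_mono mult_2)
qed

lemma dissociation_number_attained:
  assumes "finite V"
  obtains D where "dissociation_set V E D" and "card D = dissociation_number V E"
proof -
  have "finite {S. dissociation_set V E S}"
    using assms unfolding dissociation_set_def by (simp add: finite_subset)
  moreover have "dissociation_set V E {}"
    unfolding dissociation_set_def by simp
  ultimately have "dissociation_number V E \<in> card ` {S. dissociation_set V E S}"
    unfolding dissociation_number_def by (intro Max_in) auto
  then show ?thesis using that by auto
qed

lemma rearrange_dissociation_bound:
  fixes k d n a :: real
  assumes "d \<le> 2 + 2 * k * (n - d)" and "n \<le> 2 * a" and "k \<ge> 1"
  shows "1/2 * (1 + 1 / (2 * k)) * d - 1 / (2 * k) \<le> a"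
proof -
  have "k * n \<le> k * (2 * a)"
    using assms by (intro mult_left_mono) auto
  then have bound: "(2 * k + 1) * d - 2 \<le> a * (4 * k)"
    using assms(1) by (simp add: algebra_simps)
  have "1/2 * (1 + 1 / (2 * k)) * d - 1 / (2 * k) = ((2 * k + 1) * d - 2) / (4 * k)"
    using assms(3) by (simp add: field_simps)
  also have "\<dots> \<le> a"
    using bound assms(3) by (simp add: pos_divide_le_eq)
  finally show ?thesis .
qed

theorem proposition1:
  fixes V :: "'a set" and E :: "'a \<Rightarrow> 'a \<Rightarrow> bool" and \<Delta> :: nat
  assumes "\<Delta> \<ge> 2"
    and "simple_graph V E"
    and "connected_graph V E"
    and "bipartite V E"
    and "max_degree_le V E \<Delta>"
  shows "real (independence_number V E) \<ge>
           1/2 * (1 + 1 / (2 * (real \<Delta> - 1))) * real (dissociation_number V E)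
           - 1 / (2 * (real \<Delta> - 1))"
proof -
  have finV: "finite V"
    using assms(2) unfolding simple_graph_def by auto
  obtain D where D: "dissociation_set V E D" and d: "card D = dissociation_number V E"
    using dissociation_number_attained[OF finV] by blast
  have DV: "card D \<le> card V"
    using D finV card_mono unfolding dissociation_set_def by blast
  have "card D \<le> 2 + 2 * ((\<Delta> - 1) * (card V - card D))"
    using dissociation_set_card_le[OF assms(2,3,5) _ D] assms(1) by simp
  then have "real (card D) \<le> real (2 + 2 * ((\<Delta> - 1) * (card V - card D)))"
    by (simp only: of_nat_le_iff)
  also have "\<dots> = 2 + 2 * (real \<Delta> - 1) * (real (card V) - real (card D))"
    using assms(1) DV by (simp add: of_nat_diff)
  finally have "real (card D) \<le> 2 + 2 * (real \<Delta> - 1) * (real (card V) - real (card D))" .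
  moreover have "real (card V) \<le> 2 * real (independence_number V E)"
    using bipartite_card_le_twice_independence_number[OF finV assms(4)] by simp
  moreover have "1 \<le> real \<Delta> - 1"
    using assms(1) by simp
  ultimately show ?thesis
    unfolding d[symmetric] by (rule rearrange_dissociation_bound)
qed

end
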